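(* Let $\text{rank}[\mathbf{A}_{12}] = q$. Then the system $$\dot{\hat{\mathbf{z}}}_2(t) = [\mathbf{A}_{22} - \mathbf{L}\mathbf{A}_{12}]\hat{\mathbf{z}}_2(t) + \mathbf{L}\mathbf{y}_1(t) + \mathbf{D}\mathbf{u}_1(t) + \mathbf{F}\boldsymbol{\omega}(t), \qquad \dot{\boldsymbol{\omega}}(t) = \mathbf{G}[\mathbf{y}_1(t) - \mathbf{A}_{12}\hat{\mathbf{z}}_2(t)]$$ with $\text{rank}[\mathbf{G}] = k$ and $q \geq k$ is a reduced order proportional-integral observer for the system $\dot{\mathbf{x}}(t) = \mathbf{A}\mathbf{x}(t) + \mathbf{B}\mathbf{u}(t)$, $\mathbf{y}(t) = \mathbf{C}\mathbf{x}(t)$ if and only if the following condition holds: (a) The pair $(\mathbf{A}, \mathbf{C})$ is detectable.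
   Context: Consider the continuous-time LTI system $\dot{\mathbf{x}}(t) = \mathbf{A}\mathbf{x}(t) + \mathbf{B}\mathbf{u}(t)$, $\mathbf{y}(t) = \mathbf{C}\mathbf{x}(t)$ with real matrices $\mathbf{A}$ ($n\times n$), $\mathbf{B}$ ($n\times m$), $\mathbf{C}$ ($p\times n$), $\text{rank}[\mathbf{C}]=p$. Let $\mathbf{T}$ be a nonsingular real $n\times n$ matrix with $\mathbf{C}\mathbf{T}=[\mathbf{I}_p,\mathbf{0}]$, and write $\mathbf{T}^{-1}\mathbf{A}\mathbf{T} = \begin{bmatrix}\mathbf{A}_{11} & \mathbf{A}_{12}\\ \mathbf{A}_{21} & \mathbf{A}_{22}\end{bmatrix}$, $\mathbf{T}^{-1}\mathbf{B} = \begin{bmatrix}\mathbf{G}_1\\ \mathbf{G}_2\end{bmatrix}$, where $\mathbf{A}_{12}$ is $p\times(n-p)$ and $\mathbf{A}_{22}$ is $(n-p)\times(n-p)$; $\mathbf{z}=\mathbf{T}^{-1}\mathbf{x} = [\mathbf{z}_1;\mathbf{z}_2]$ with $\mathbf{z}_1=\mathbf{y}$ and $\mathbf{z}_2$ of size $(n-p)$. Define $\mathbf{u}_1(t)=[\mathbf{y}(t);\mathbf{u}(t)]$, $\mathbf{y}_1(t)=\dot{\mathbf{y}}(t)-\mathbf{A}_{11}\mathbf{y}(t)-\mathbf{G}_1\mathbf{u}(t)$, $\mathbf{D}=[\mathbf{A}_{21},\mathbf{G}_2]$, so that $\dot{\mathbf{z}}_2 = \mathbf{A}_{22}\mathbf{z}_2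 + \mathbf{D}\mathbf{u}_1$, $\mathbf{y}_1=\mathbf{A}_{12}\mathbf{z}_2$. In the observer, $\hat{\mathbf{z}}_2(t)$ has size $(n-p)$, $\boldsymbol{\omega}(t)$ has size $k$, and $\mathbf{L}$, $\mathbf{F}$, $\mathbf{G}$ are real matrices of size $(n-p)\times p$, $(n-p)\times k$, $k\times p$. The observer is called a reduced order proportional-integral observer if for arbitrary initial conditions and any input, $\hat{\mathbf{z}}_2(t)-\mathbf{z}_2(t)\to\mathbf{0}$ and $\boldsymbol{\omega}(t)\to\mathbf{0}$ as $t\to\infty$; equivalently, the matrix $\begin{bmatrix}\mathbf{A}_{22}-\mathbf{L}\mathbf{A}_{12} & \mathbf{F}\\ -\mathbf{G}\mathbf{A}_{12} & \mathbf{0}\end{bmatrix}$ is Hurwitz stable (all eigenvalues have negative real parts). The pair $(\mathbf{A},\mathbf{C})$ is detectable iff $\text{rank}\begin{bmatrix}\mathbf{C}\\ s\mathbf{I}_n-\mathbf{A}\end{bmatrix}=n$ for all complex $s$ with $\mathrm{Re}(s)\ge 0$. *)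

theory Defs
  imports "Jordan_Normal_Form.DL_Rank" "Jordan_Normal_Form.Char_Poly"
begin

abbreviation mrank :: "'a::field mat \<Rightarrow> nat" where
  "mrank M \<equiv> vec_space.rank (dim_row M) M"

abbreviation cmat :: "real mat \<Rightarrow> complex mat" where
  "cmat M \<equiv> map_mat complex_of_real M"

definition hurwitz :: "real mat \<Rightarrow> bool" where
  "hurwitz M \<longleftrightarrow> (\<forall>e::complex. eigenvalue (cmat M) e \<longrightarrow> Re e < 0)"

definition detectable :: "real mat \<Rightarrow> real mat \<Rightarrow> bool" where
  "detectable A C \<longleftrightarrow>
     (\<forall>s::complex. Re s \<ge> 0 \<longrightarrow>
        mrank (cmat C @\<^sub>r (s \<cdot>\<^sub>m 1\<^sub>m (dim_row A) - cmat A)) = dim_row A)"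

(* the reduced order PI observer with gains L, F, G (G of size k x p):
   error dynamics matrix [A22 - L A12, F; -G A12, 0] is Hurwitz *)
definition ro_pi_observer :: "real mat \<Rightarrow> real mat \<Rightarrow> real mat \<Rightarrow> real mat \<Rightarrow> real mat \<Rightarrow> bool" where
  "ro_pi_observer A12 A22 L F G \<longleftrightarrow>
     hurwitz (four_block_mat (A22 - L * A12) F (- (G * A12)) (0\<^sub>m (dim_row G) (dim_row G)))"

end

theory Submission
  imports Defs
begin

text \<open>
  Detectability of (A, C) is equivalent to the Popov-Belevitch-Hautus condition: no eigenvector of A
  for an eigenvalue s with Re s >= 0 lies in the kernel of C. The condition is invariant under a
  change of coordinates, and for C T = [I 0] it becomes the same condition for the pair (A22, A12).

  Necessity: if A22 z = s z and A12 z = 0, then (z, 0) is an eigenvector of the observer error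
  matrix for s, so Re s < 0.

  Sufficiency: a detectable pair admits an output injection L with A - L C Hurwitz, by induction on
  the dimension: after a change of coordinates one output measures the first state directly, and the
  remaining states, with their coupling row as an extra output, form a smaller detectable pair.
  Choose L0 with A22 - L0 A12 Hurwitz and Y with A12 Y injective (possible as k <= rank A12), and put
  F = (A22 - L0 A12) Y. Then the augmented pair ([A22 F; 0 0], [A12 0]) is again detectable, and an
  injection [L; G] stabilising it yields exactly the error matrix of the PI observer. That matrix is
  invertible, which forces G to have a right inverse, so rank G = k.
\<close>

section \<open>Complexified matrices and Hurwitz stability\<close>

lemma mult_mat_vec_index_sum:
  assumes "A \<in> carrier_mat n m" "v \<in> carrier_vec m" "i < n"
  shows "(A *\<^sub>v v) $ i = (\<Sum>j<m. A $$ (i,j) * v $ j)"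
  using assms by (auto simp: scalar_prod_def lessThan_atLeast0 intro!: sum.cong)

lemma mult_mat_index_sum:
  assumes "A \<in> carrier_mat n m" "B \<in> carrier_mat m k" "i < n" "j < k"
  shows "(A * B) $$ (i,j) = (\<Sum>l<m. A $$ (i,l) * B $$ (l,j))"
  using assms by (auto simp: scalar_prod_def lessThan_atLeast0 intro!: sum.cong)

lemma cmat_mult_vec_index_sum:
  assumes "A \<in> carrier_mat n m" "v \<in> carrier_vec m" "i < n"
  shows "(cmat A *\<^sub>v v) $ i = (\<Sum>j<m. complex_of_real (A $$ (i,j)) * v $ j)"
  using assms by (auto simp: scalar_prod_def lessThan_atLeast0 intro!: sum.cong)

lemma cmat_carrier_iff [simp]: "cmat A \<in> carrier_mat n m \<longleftrightarrow> A \<in> carrier_mat n m"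
  unfolding carrier_mat_def by simp

lemma cmat_mult: "A \<in> carrier_mat n m \<Longrightarrow> B \<in> carrier_mat m k \<Longrightarrow> cmat (A * B) = cmat A * cmat B"
  by (rule of_real_hom.mat_hom_mult)

lemma cmat_one [simp]: "cmat (1\<^sub>m n) = 1\<^sub>m n"
  by (rule eq_matI) auto

lemma cmat_zero [simp]: "cmat (0\<^sub>m nr nc) = 0\<^sub>m nr nc"
  by (rule eq_matI) auto

lemma cmat_minus: "A \<in> carrier_mat nr nc \<Longrightarrow> B \<in> carrier_mat nr nc \<Longrightarrow> cmat (A - B) = cmat A - cmat B"
  by (rule eq_matI) auto

lemma cmat_uminus: "cmat (- A) = - cmat A"
  by (rule eq_matI) auto

lemma cmat_similar:
  "R \<in> carrier_mat n n \<Longrightarrow> M \<in> carrier_mat n n \<Longrightarrow> S \<in> carrier_mat n n \<Longrightarrow>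
    cmat (R * M * S) = cmat R * cmat M * cmat S"
  by (metis cmat_mult mult_carrier_mat)

lemma cmat_four_block_mat:
  assumes "A \<in> carrier_mat nr1 nc1" "B \<in> carrier_mat nr1 nc2" "C \<in> carrier_mat nr2 nc1" "D \<in> carrier_mat nr2 nc2"
  shows "cmat (four_block_mat A B C D) = four_block_mat (cmat A) (cmat B) (cmat C) (cmat D)"
  by (rule map_four_block_mat[OF assms])

lemma cmat_kernel_trivial:
  fixes B :: "real mat"
  assumes B: "B \<in> carrier_mat m k" and inj: "\<And>w. w \<in> carrier_vec k \<Longrightarrow> B *\<^sub>v w = 0\<^sub>v m \<Longrightarrow> w = 0\<^sub>v k"
    and w: "w \<in> carrier_vec k" and Bw: "cmat B *\<^sub>v w = 0\<^sub>v m"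
  shows "w = 0\<^sub>v k"
proof -
  have row: "(\<Sum>j<k. complex_of_real (B $$ (i,j)) * w $ j) = 0" if i: "i < m" for i
    using cmat_mult_vec_index_sum[OF B w i] Bw i by simp
  have "(B *\<^sub>v vec k (\<lambda>j. Re (w $ j))) $ i = Re (\<Sum>j<k. complex_of_real (B $$ (i,j)) * w $ j)"
    and "(B *\<^sub>v vec k (\<lambda>j. Im (w $ j))) $ i = Im (\<Sum>j<k. complex_of_real (B $$ (i,j)) * w $ j)"
    if "i < m" for i
    unfolding mult_mat_vec_index_sum[OF B vec_carrier that] by (simp_all add: Re_sum Im_sum)
  hence "B *\<^sub>v vec k (\<lambda>j. Re (w $ j)) = 0\<^sub>v m" "B *\<^sub>v vec k (\<lambda>j. Im (w $ j)) = 0\<^sub>v m"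
    using B row by (auto intro!: eq_vecI)
  hence "vec k (\<lambda>j. Re (w $ j)) = 0\<^sub>v k" "vec k (\<lambda>j. Im (w $ j)) = 0\<^sub>v k" using inj by auto
  thus "w = 0\<^sub>v k" using w by (intro eq_vecI) (auto simp: complex_eq_iff dest!: vec_eq_iff[THEN iffD1])
qed

lemma zero_vec_append: "0\<^sub>v (n + m) = (0\<^sub>v n :: 'a :: zero vec) @\<^sub>v 0\<^sub>v m"
  by (intro eq_vecI) auto

lemma smult_vec_append:
  "v \<in> carrier_vec n \<Longrightarrow> w \<in> carrier_vec m \<Longrightarrow> (s :: 'a :: semiring_0) \<cdot>\<^sub>v (v @\<^sub>v w) = (s \<cdot>\<^sub>v v) @\<^sub>v (s \<cdot>\<^sub>v w)"
  by (intro eq_vecI) auto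

lemma append_vec_carrier_0: "w \<in> carrier_vec 0 \<Longrightarrow> v @\<^sub>v w = v"
  by (intro eq_vecI) auto

lemma hurwitz_iff_eigenvector:
  "hurwitz M \<longleftrightarrow> (\<forall>e v. v \<in> carrier_vec (dim_row M) \<longrightarrow> v \<noteq> 0\<^sub>v (dim_row M)
     \<longrightarrow> cmat M *\<^sub>v v = e \<cdot>\<^sub>v v \<longrightarrow> Re e < 0)"
  unfolding hurwitz_def eigenvalue_def eigenvector_def by auto

lemma hurwitzD:
  assumes "hurwitz M" "M \<in> carrier_mat n n" "v \<in> carrier_vec n" "v \<noteq> 0\<^sub>v n" "cmat M *\<^sub>v v = e \<cdot>\<^sub>v v"
  shows "Re e < 0"
  using assms unfolding hurwitz_iff_eigenvector by auto

lemma hurwitz_empty: "M \<in> carrier_mat 0 0 \<Longrightarrow> hurwitz M"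
  unfolding hurwitz_iff_eigenvector by (auto intro!: eq_vecI)

lemma hurwitz_similar:
  assumes R: "R \<in> carrier_mat n n" and S: "S \<in> carrier_mat n n" and M: "M \<in> carrier_mat n n"
    and SR: "S * R = 1\<^sub>m n" and h: "hurwitz (R * M * S)"
  shows "hurwitz M"
  unfolding hurwitz_iff_eigenvector
proof (intro allI impI)
  fix e v assume v: "v \<in> carrier_vec (dim_row M)" "v \<noteq> 0\<^sub>v (dim_row M)" "cmat M *\<^sub>v v = e \<cdot>\<^sub>v v"
  have vc: "v \<in> carrier_vec n" using v M by auto
  have cR: "cmat R \<in> carrier_mat n n" and cS: "cmat S \<in> carrier_mat n n" and cM: "cmat M \<in> carrier_mat n n"
    using R S M by auto
  define u where "u = cmat R *\<^sub>v v"
  have uc: "u \<in> carrier_vec n" unfolding u_def using cR vc by simp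
  have "cmat S *\<^sub>v u = (cmat S * cmat R) *\<^sub>v v"
    unfolding u_def using assoc_mult_mat_vec[OF cS cR vc] by simp
  also have "\<dots> = v" unfolding cmat_mult[OF S R, symmetric] SR using vc by simp
  finally have Su: "cmat S *\<^sub>v u = v" .
  have u0: "u \<noteq> 0\<^sub>v n" using Su v(2) M cS by auto
  have "cmat (R * M * S) *\<^sub>v u = (cmat R * cmat M) *\<^sub>v (cmat S *\<^sub>v u)"
    unfolding cmat_similar[OF R M S] using assoc_mult_mat_vec[OF mult_carrier_mat[OF cR cM] cS uc] .
  also have "\<dots> = cmat R *\<^sub>v (cmat M *\<^sub>v v)" unfolding Su using assoc_mult_mat_vec[OF cR cM vc] .
  also have "\<dots> = e \<cdot>\<^sub>v u" unfolding v(3) u_def using mult_mat_vec[OF cR vc] .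
  finally show "Re e < 0" using hurwitzD[OF h _ uc u0] R M S by simp
qed

lemma hurwitz_cmat_kernel_trivial:
  assumes "hurwitz M" "M \<in> carrier_mat n n" "w \<in> carrier_vec n" "cmat M *\<^sub>v w = 0\<^sub>v n"
  shows "w = 0\<^sub>v n"
proof (rule ccontr)
  assume "w \<noteq> 0\<^sub>v n"
  moreover have "cmat M *\<^sub>v w = 0 \<cdot>\<^sub>v w" using assms(3,4) by (intro eq_vecI) auto
  ultimately show False using hurwitzD[OF assms(1,2,3)] by fastforce
qed

lemma hurwitz_det_nonzero:
  assumes h: "hurwitz M" and M: "M \<in> carrier_mat n n"
  shows "det M \<noteq> 0"
proof
  assume "det M = 0"
  hence "det (cmat M) = 0" by simp
  then obtain w where "w \<in> carrier_vec n" "w \<noteq> 0\<^sub>v n" "cmat M *\<^sub>v w = 0\<^sub>v n"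
    using det_0_iff_vec_prod_zero_field[of "cmat M" n] M by auto
  thus False using hurwitz_cmat_kernel_trivial[OF h M] by blast
qed

(* In the coordinates (v $ 0, z), M acts as the block triangular matrix [-1, a; 0, H]:
   it is that matrix conjugated by the shear [1, 0; f, I]. *)
lemma bordered_mat_mult_vec:
  fixes H M :: "real mat" and a f :: "nat \<Rightarrow> real"
  assumes H: "H \<in> carrier_mat n n" and M: "M \<in> carrier_mat (Suc n) (Suc n)"
    and m00: "M $$ (0,0) = -1 - (\<Sum>j<n. a j * f j)"
    and m0j: "\<And>j. j < n \<Longrightarrow> M $$ (0, Suc j) = a j"
    and mrj: "\<And>r j. r < n \<Longrightarrow> j < n \<Longrightarrow> M $$ (Suc r, Suc j) = H $$ (r,j) + f r * a j"
    and mr0: "\<And>r. r < n \<Longrightarrow> M $$ (Suc r, 0) = - f r - (\<Sum>j<n. (H $$ (r,j) + f r * a j) * f j)"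
    and v: "v \<in> carrier_vec (Suc n)"
  defines "z \<equiv> vec n (\<lambda>j. v $ Suc j - complex_of_real (f j) * v $ 0)"
  shows "(cmat M *\<^sub>v v) $ 0 = (\<Sum>j<n. complex_of_real (a j) * z $ j) - v $ 0"
    and "r < n \<Longrightarrow> (cmat M *\<^sub>v v) $ Suc r
      = (cmat H *\<^sub>v z) $ r + complex_of_real (f r) * ((\<Sum>j<n. complex_of_real (a j) * z $ j) - v $ 0)"
proof -
  have row: "(cmat M *\<^sub>v v) $ i = complex_of_real (M $$ (i,0)) * v $ 0
      + (\<Sum>j<n. complex_of_real (M $$ (i, Suc j)) * v $ Suc j)" if "i < Suc n" for i
    unfolding cmat_mult_vec_index_sum[OF M v that] sum.lessThan_Suc_shift ..
  have zsum: "(\<Sum>j<n. c j * z $ j) = (\<Sum>j<n. c j * v $ Suc j) - (\<Sum>j<n. c j * complex_of_real (f j)) * v $ 0"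
    for c :: "nat \<Rightarrow> complex"
    unfolding z_def by (simp add: right_diff_distrib sum_subtractf sum_distrib_right mult.assoc)
  show "(cmat M *\<^sub>v v) $ 0 = (\<Sum>j<n. complex_of_real (a j) * z $ j) - v $ 0"
    unfolding row[OF zero_less_Suc] zsum m00
    by (simp add: m0j of_real_sum algebra_simps)
  assume r: "r < n"
  hence r': "Suc r < Suc n" by simp
  have "(cmat H *\<^sub>v z) $ r = (\<Sum>j<n. complex_of_real (H $$ (r,j)) * z $ j)"
    by (rule cmat_mult_vec_index_sum[OF H _ r]) (simp add: z_def)
  thus "(cmat M *\<^sub>v v) $ Suc r
      = (cmat H *\<^sub>v z) $ r + complex_of_real (f r) * ((\<Sum>j<n. complex_of_real (a j) * z $ j) - v $ 0)"
    unfolding row[OF r'] zsum using r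
    by (simp add: mr0 mrj of_real_sum sum.distrib sum_distrib_left algebra_simps)
qed

lemma hurwitz_bordered:
  fixes H M :: "real mat" and a f :: "nat \<Rightarrow> real"
  assumes H: "H \<in> carrier_mat n n" and hH: "hurwitz H" and M: "M \<in> carrier_mat (Suc n) (Suc n)"
    and m00: "M $$ (0,0) = -1 - (\<Sum>j<n. a j * f j)"
    and m0j: "\<And>j. j < n \<Longrightarrow> M $$ (0, Suc j) = a j"
    and mrj: "\<And>r j. r < n \<Longrightarrow> j < n \<Longrightarrow> M $$ (Suc r, Suc j) = H $$ (r,j) + f r * a j"
    and mr0: "\<And>r. r < n \<Longrightarrow> M $$ (Suc r, 0) = - f r - (\<Sum>j<n. (H $$ (r,j) + f r * a j) * f j)"
  shows "hurwitz M"
  unfolding hurwitz_iff_eigenvector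
proof (intro allI impI)
  fix e v assume v: "v \<in> carrier_vec (dim_row M)" "v \<noteq> 0\<^sub>v (dim_row M)" "cmat M *\<^sub>v v = e \<cdot>\<^sub>v v"
  have vc: "v \<in> carrier_vec (Suc n)" using v(1) M by simp
  define z where "z = vec n (\<lambda>j. v $ Suc j - complex_of_real (f j) * v $ 0)"
  define y where "y = (\<Sum>j<n. complex_of_real (a j) * z $ j) - v $ 0"
  have y: "y = e * v $ 0"
    using bordered_mat_mult_vec(1)[OF H M m00 m0j mrj mr0 vc] arg_cong[OF v(3), of "\<lambda>x. x $ 0"] vc
    unfolding y_def z_def by simp
  have Hz: "cmat H *\<^sub>v z = e \<cdot>\<^sub>v z"
  proof (rule eq_vecI)
    fix r assume "r < dim_vec (e \<cdot>\<^sub>v z)"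
    hence r: "r < n" by (simp add: z_def)
    have "(cmat H *\<^sub>v z) $ r + complex_of_real (f r) * y = e * v $ Suc r"
      using bordered_mat_mult_vec(2)[OF H M m00 m0j mrj mr0 vc r] arg_cong[OF v(3), of "\<lambda>x. x $ Suc r"] vc r
      unfolding y_def z_def by simp
    thus "(cmat H *\<^sub>v z) $ r = (e \<cdot>\<^sub>v z) $ r" using r y by (simp add: z_def algebra_simps)
  qed (use H in \<open>simp add: z_def\<close>)
  show "Re e < 0"
  proof (cases "z = 0\<^sub>v n")
    case False
    thus ?thesis using hurwitzD[OF hH H _ False Hz] by (simp add: z_def)
  next
    case True
    hence "(-1) * v $ 0 = e * v $ 0" using y unfolding y_def by simp
    moreover have "v $ 0 \<noteq> 0"
    proof
      assume v00: "v $ 0 = 0"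
      have "v $ Suc r = 0" if "r < n" for r
        using arg_cong[OF True, of "\<lambda>x. x $ r"] that v00 by (simp add: z_def)
      hence "v = 0\<^sub>v (Suc n)" using v00 vc by (intro eq_vecI) (auto simp: less_Suc_eq_0_disj)
      thus False using v(2) M by simp
    qed
    ultimately have "e = -1" by (simp only: mult_cancel_right) simp
    thus ?thesis by simp
  qed
qed

section \<open>Rank and injectivity\<close>

context vec_space
begin

lemma non_distinct_cols_low_rank:
  fixes A :: "'a mat"
  assumes A: "A \<in> carrier_mat n nc" and nd: "\<not> distinct (cols A)"
  shows "rank A < nc"
proof -
  obtain S where S: "maximal S (\<lambda>T. T \<subseteq> set (cols A) \<and> lin_indpt T)"
    using maximal_exists[of "(\<lambda>T. T \<subseteq> set (cols A) \<and> lin_indpt T)" "card (set (cols A))" "{}"]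
    by (meson List.finite_set card_mono empty_iff empty_subsetI finite_lin_indpt2 rev_finite_subset)
  have "card S \<le> card (set (cols A))" using S by (simp add: card_mono maximal_def)
  moreover have "card (set (cols A)) < length (cols A)"
    using nd card_distinct[of "cols A"] card_length[of "cols A"] by linarith
  ultimately show ?thesis using rank_card_indpt[OF A S] A by simp
qed

lemma distinct_cols_if_kernel_trivial:
  fixes A :: "'a mat"
  assumes A: "A \<in> carrier_mat n nc" and ker: "\<And>v. v \<in> carrier_vec nc \<Longrightarrow> A *\<^sub>v v = 0\<^sub>v n \<Longrightarrow> v = 0\<^sub>v nc"
  shows "distinct (cols A)"
proof (rule ccontr)
  assume "\<not> distinct (cols A)"
  then obtain i j where ij: "i \<noteq> j" "i < nc" "j < nc" "col A i = col A j"
    using A by (auto simp: distinct_conv_nth)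
  define v :: "'a vec" where "v = unit_vec nc i - unit_vec nc j"
  have vc: "v \<in> carrier_vec nc" unfolding v_def by simp
  have "A *\<^sub>v v = 0\<^sub>v n"
  proof (rule eq_vecI)
    fix r assume "r < dim_vec (0\<^sub>v n)"
    hence r: "r < n" by simp
    have "col A i $ r = col A j $ r" using ij(4) by simp
    hence "A $$ (r,i) = A $$ (r,j)" using r ij(2,3) A by simp
    moreover have "(A *\<^sub>v v) $ r = (\<Sum>l<nc. (if l = i then A $$ (r,l) else 0) - (if l = j then A $$ (r,l) else 0))"
      unfolding mult_mat_vec_index_sum[OF A vc r] by (rule sum.cong) (auto simp: v_def ij)
    ultimately show "(A *\<^sub>v v) $ r = 0\<^sub>v n $ r" using r ij by (simp add: sum_subtractf)
  qed (use A in simp)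
  moreover have "v $ i \<noteq> 0" unfolding v_def using ij by simp
  hence "v \<noteq> 0\<^sub>v nc" using ij by auto
  ultimately show False using ker vc by blast
qed

lemma rank_eq_ncols_iff_kernel_trivial:
  fixes A :: "'a mat"
  assumes A: "A \<in> carrier_mat n nc"
  shows "rank A = nc \<longleftrightarrow> (\<forall>v. v \<in> carrier_vec nc \<longrightarrow> A *\<^sub>v v = 0\<^sub>v n \<longrightarrow> v = 0\<^sub>v nc)"
proof (intro iffI allI impI)
  fix v assume r: "rank A = nc" and v: "v \<in> carrier_vec nc" and Av: "A *\<^sub>v v = 0\<^sub>v n"
  have d: "distinct (cols A)" using non_distinct_cols_low_rank[OF A] r by auto
  show "v = 0\<^sub>v nc"
    using lin_depI[OF A v _ Av d] full_rank_lin_indpt[OF A r d] by blast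
next
  assume ker: "\<forall>v. v \<in> carrier_vec nc \<longrightarrow> A *\<^sub>v v = 0\<^sub>v n \<longrightarrow> v = 0\<^sub>v nc"
  have d: "distinct (cols A)" using distinct_cols_if_kernel_trivial[OF A] ker by blast
  have "lin_indpt (set (cols A))" using lin_depE[OF A _ d] ker by metis
  thus "rank A = nc" using lin_indpt_full_rank[OF A d] by blast
qed

lemma rank_right_invertible:
  fixes G :: "'a mat"
  assumes G: "G \<in> carrier_mat n p" and X: "X \<in> carrier_mat p n" and GX: "G * X = 1\<^sub>m n"
  shows "rank G = n"
proof -
  have "carrier_vec n \<subseteq> col_space G"
  proof
    fix y :: "'a vec" assume y: "y \<in> carrier_vec n"
    have "G *\<^sub>v (X *\<^sub>v y) = y" using assoc_mult_mat_vec[OF G X y] GX y by simp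
    moreover have "X *\<^sub>v y \<in> carrier_vec (dim_col G)" using X y G by simp
    ultimately show "y \<in> col_space G" unfolding col_space_eq[OF G] using y G by blast
  qed
  hence "col_space G = carrier_vec n" using col_space_eq[OF G] G by auto
  hence "span_vs (set (cols G)) = V" unfolding col_space_def by simp
  thus ?thesis unfolding rank_def using dim_is_n by simp
qed

lemma exists_indpt_col_list:
  fixes A :: "'a mat"
  assumes A: "A \<in> carrier_mat n nc" and k: "k \<le> rank A"
  obtains xs where "length xs = k" "distinct xs" "set xs \<subseteq> set (cols A)" "lin_indpt (set xs)"
proof -
  obtain S where S: "maximal S (\<lambda>T. T \<subseteq> set (cols A) \<and> lin_indpt T)"
    using maximal_exists[of "(\<lambda>T. T \<subseteq> set (cols A) \<and> lin_indpt T)" "card (set (cols A))" "{}"]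
    by (meson List.finite_set card_mono empty_iff empty_subsetI finite_lin_indpt2 rev_finite_subset)
  have SA: "S \<subseteq> set (cols A)" and liS: "lin_indpt S" using S unfolding maximal_def by auto
  obtain T where T: "T \<subseteq> S" "card T = k" "finite T"
    using obtain_subset_with_card_n[of k S] k rank_card_indpt[OF A S] by metis
  obtain xs where xs: "set xs = T" "distinct xs" using finite_distinct_list[OF T(3)] by blast
  show thesis
  proof
    show "length xs = k" using xs T(2) distinct_card by fastforce
    show "lin_indpt (set xs)" using subset_li_is_li[OF liS T(1)] xs(1) by simp
  qed (use xs T SA in auto)
qed

lemma exists_injective_column_selection:
  fixes A :: "'a mat"
  assumes A: "A \<in> carrier_mat n nc" and k: "k \<le> rank A"
  shows "\<exists>Y. Y \<in> carrier_mat nc k \<and> (\<forall>w. w \<in> carrier_vec k \<longrightarrow> (A * Y) *\<^sub>v w = 0\<^sub>v n \<longrightarrow> w = 0\<^sub>v k)"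
proof -
  obtain xs where lxs: "length xs = k" and dxs: "distinct xs" and xsA: "set xs \<subseteq> set (cols A)"
    and li: "lin_indpt (set xs)"
    using exists_indpt_col_list[OF A k] by blast
  have "\<forall>i<k. \<exists>j. j < nc \<and> xs ! i = col A j"
    using xsA lxs A by (auto simp: set_conv_nth subset_iff) (metis cols_length cols_nth carrier_matD(2))
  then obtain idx where idx: "\<And>i. i < k \<Longrightarrow> idx i < nc \<and> xs ! i = col A (idx i)" by metis
  define Y :: "'a mat" where "Y = mat nc k (\<lambda>(r,i). if r = idx i then 1 else 0)"
  have Y: "Y \<in> carrier_mat nc k" unfolding Y_def by simp
  have xsc: "set xs \<subseteq> carrier_vec n" using xsA A cols_dim by blast
  have AY: "A * Y = mat_of_cols n xs"
  proof (rule eq_matI)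
    fix a i assume "a < dim_row (mat_of_cols n xs)" "i < dim_col (mat_of_cols n xs)"
    hence a: "a < n" and i: "i < k" using lxs by auto
    have "(A * Y) $$ (a,i) = (\<Sum>r<nc. if r = idx i then A $$ (a,r) else 0)"
      unfolding mult_mat_index_sum[OF A Y a i] unfolding Y_def by (rule sum.cong) (auto simp: i)
    also have "\<dots> = col A (idx i) $ a" using idx[OF i] A a by simp
    finally show "(A * Y) $$ (a,i) = mat_of_cols n xs $$ (a,i)"
      using idx[OF i] a i lxs by (simp add: mat_of_cols_def)
  qed (use A Y lxs in auto)
  have "w = 0\<^sub>v k" if w: "w \<in> carrier_vec k" and Aw: "(A * Y) *\<^sub>v w = 0\<^sub>v n" for w
  proof (rule ccontr)
    assume "w \<noteq> 0\<^sub>v k"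
    hence "lin_dep (set (cols (mat_of_cols n xs)))"
      using lin_depI[OF _ w _ Aw[unfolded AY]] lxs dxs cols_mat_of_cols[OF xsc] by auto
    thus False using li cols_mat_of_cols[OF xsc] by simp
  qed
  thus ?thesis using Y by blast
qed

end

section \<open>The Hautus test\<close>

definition pbh_detectable :: "real mat \<Rightarrow> real mat \<Rightarrow> bool" where
  "pbh_detectable A C \<longleftrightarrow> (\<forall>s v. 0 \<le> Re s \<longrightarrow> v \<in> carrier_vec (dim_col A) \<longrightarrow> cmat A *\<^sub>v v = s \<cdot>\<^sub>v v
     \<longrightarrow> cmat C *\<^sub>v v = 0\<^sub>v (dim_row C) \<longrightarrow> v = 0\<^sub>v (dim_col A))"

lemma pbh_detectableD:
  assumes "pbh_detectable A C" "A \<in> carrier_mat n n" "C \<in> carrier_mat p n" "0 \<le> Re s" "v \<in> carrier_vec n"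
    "cmat A *\<^sub>v v = s \<cdot>\<^sub>v v" "cmat C *\<^sub>v v = 0\<^sub>v p"
  shows "v = 0\<^sub>v n"
  using assms unfolding pbh_detectable_def by auto

lemma pbh_detectableI:
  assumes "A \<in> carrier_mat n n" "C \<in> carrier_mat p n"
    and "\<And>s v. 0 \<le> Re s \<Longrightarrow> v \<in> carrier_vec n \<Longrightarrow> cmat A *\<^sub>v v = s \<cdot>\<^sub>v v \<Longrightarrow> cmat C *\<^sub>v v = 0\<^sub>v p
      \<Longrightarrow> v = 0\<^sub>v n"
  shows "pbh_detectable A C"
  using assms unfolding pbh_detectable_def by auto

lemma pbh_detectable_similar:
  assumes R: "R \<in> carrier_mat n n" and S: "S \<in> carrier_mat n n" and A: "A \<in> carrier_mat n n"
    and C: "C \<in> carrier_mat p n" and SR: "S * R = 1\<^sub>m n" and RS: "R * S = 1\<^sub>m n"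
    and P: "pbh_detectable A C"
  shows "pbh_detectable (R * A * S) (C * S)"
proof (rule pbh_detectableI)
  show "R * A * S \<in> carrier_mat n n" "C * S \<in> carrier_mat p n" using R A S C by auto
  fix s v assume s: "0 \<le> Re s" and v: "v \<in> carrier_vec n" and ev: "cmat (R * A * S) *\<^sub>v v = s \<cdot>\<^sub>v v"
    and Cv: "cmat (C * S) *\<^sub>v v = 0\<^sub>v p"
  have cR: "cmat R \<in> carrier_mat n n" and cS: "cmat S \<in> carrier_mat n n" and cA: "cmat A \<in> carrier_mat n n"
    and cC: "cmat C \<in> carrier_mat p n"
    using R S A C by auto
  define u where "u = cmat S *\<^sub>v v"
  have uc: "u \<in> carrier_vec n" unfolding u_def using cS v by simp
  have "cmat A *\<^sub>v u = (cmat S * cmat R) *\<^sub>v (cmat A *\<^sub>v u)"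
    unfolding cmat_mult[OF S R, symmetric] SR using cA uc by simp
  also have "\<dots> = cmat S *\<^sub>v (cmat R *\<^sub>v (cmat A *\<^sub>v (cmat S *\<^sub>v v)))"
    unfolding u_def using cS cR cA v by simp
  also have "\<dots> = cmat S *\<^sub>v (cmat (R * A * S) *\<^sub>v v)"
    unfolding cmat_similar[OF R A S]
    by (simp only: assoc_mult_mat_vec[OF mult_carrier_mat[OF cR cA] cS v]
        assoc_mult_mat_vec[OF cR cA mult_mat_vec_carrier[OF cS v]])
  also have "\<dots> = s \<cdot>\<^sub>v u" unfolding ev u_def using mult_mat_vec[OF cS v] .
  finally have Au: "cmat A *\<^sub>v u = s \<cdot>\<^sub>v u" .
  have Cu: "cmat C *\<^sub>v u = 0\<^sub>v p"
    using Cv unfolding u_def cmat_mult[OF C S] using cC cS v by (simp add: assoc_mult_mat_vec)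
  have "v = (cmat R * cmat S) *\<^sub>v v" unfolding cmat_mult[OF R S, symmetric] RS using v by simp
  also have "\<dots> = cmat R *\<^sub>v u" unfolding u_def using cR cS v by (simp add: assoc_mult_mat_vec)
  also have "\<dots> = 0\<^sub>v n" unfolding pbh_detectableD[OF P A C s uc Au Cu] using cR by auto
  finally show "v = 0\<^sub>v n" .
qed

lemma pbh_detectable_zero_output_imp_hurwitz:
  assumes A: "A \<in> carrier_mat n n" and P: "pbh_detectable A (0\<^sub>m p n)"
  shows "hurwitz A"
  unfolding hurwitz_iff_eigenvector
proof (intro allI impI)
  fix e v assume v: "v \<in> carrier_vec (dim_row A)" "v \<noteq> 0\<^sub>v (dim_row A)" "cmat A *\<^sub>v v = e \<cdot>\<^sub>v v"
  show "Re e < 0"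
  proof (rule ccontr)
    assume "\<not> Re e < 0"
    moreover have "cmat (0\<^sub>m p n) *\<^sub>v v = 0\<^sub>v p" using v(1) A by (intro eq_vecI) auto
    ultimately have "v = 0\<^sub>v n" using pbh_detectableD[OF P A zero_carrier_mat _ _ v(3)] v(1) A by simp
    thus False using v(2) A by simp
  qed
qed

lemma char_mat_mult_vec_eq_0_iff:
  assumes A: "A \<in> carrier_mat n n" and v: "v \<in> carrier_vec n"
  shows "(s \<cdot>\<^sub>m 1\<^sub>m n - cmat A) *\<^sub>v v = 0\<^sub>v n \<longleftrightarrow> cmat A *\<^sub>v v = s \<cdot>\<^sub>v v"
proof -
  have cA: "cmat A \<in> carrier_mat n n" using A by simp
  have sI: "s \<cdot>\<^sub>m 1\<^sub>m n *\<^sub>v v = s \<cdot>\<^sub>v v"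
  proof (rule eq_vecI)
    fix i assume "i < dim_vec (s \<cdot>\<^sub>v v)"
    hence i: "i < n" using v by simp
    have "(s \<cdot>\<^sub>m 1\<^sub>m n *\<^sub>v v) $ i = (\<Sum>j<n. if j = i then s * v $ j else 0)"
      unfolding mult_mat_vec_index_sum[OF smult_carrier_mat[OF one_carrier_mat] v i]
      by (rule sum.cong) (auto simp: i)
    thus "(s \<cdot>\<^sub>m 1\<^sub>m n *\<^sub>v v) $ i = (s \<cdot>\<^sub>v v) $ i" using i v by simp
  qed (use v in simp)
  have "(s \<cdot>\<^sub>m 1\<^sub>m n - cmat A) *\<^sub>v v = s \<cdot>\<^sub>v v - cmat A *\<^sub>v v"
    using minus_mult_distrib_mat_vec[OF smult_carrier_mat[OF one_carrier_mat] cA v] sI by simp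
  thus ?thesis using cA v by (auto simp: vec_eq_iff)
qed

lemma detectable_iff_pbh_detectable:
  assumes A: "A \<in> carrier_mat n n" and C: "C \<in> carrier_mat p n"
  shows "detectable A C \<longleftrightarrow> pbh_detectable A C"
proof -
  have cA: "cmat A \<in> carrier_mat n n" and cC: "cmat C \<in> carrier_mat p n" using A C by auto
  define K where "K = (\<lambda>s. cmat C @\<^sub>r (s \<cdot>\<^sub>m 1\<^sub>m n - cmat A))"
  have K: "K s \<in> carrier_mat (p + n) n" for s
    unfolding K_def by (rule carrier_append_rows[OF cC minus_carrier_mat[OF cA]])
  have Kv: "K s *\<^sub>v v = 0\<^sub>v (p + n) \<longleftrightarrow> cmat C *\<^sub>v v = 0\<^sub>v p \<and> cmat A *\<^sub>v v = s \<cdot>\<^sub>v v"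
    if v: "v \<in> carrier_vec n" for s v
  proof -
    have "cmat C *\<^sub>v v \<in> carrier_vec p" using cC v by simp
    thus ?thesis
      unfolding K_def mat_mult_append[OF cC minus_carrier_mat[OF cA] v] zero_vec_append
      using append_vec_eq[of "cmat C *\<^sub>v v" p "0\<^sub>v p"] char_mat_mult_vec_eq_0_iff[OF A v] by simp
  qed
  have rk: "mrank (K s) = n \<longleftrightarrow> (\<forall>v. v \<in> carrier_vec n \<longrightarrow> K s *\<^sub>v v = 0\<^sub>v (p + n) \<longrightarrow> v = 0\<^sub>v n)"
    for s using vec_space.rank_eq_ncols_iff_kernel_trivial[OF K] carrier_matD(1)[OF K] by simp
  have "detectable A C \<longleftrightarrow> (\<forall>s. 0 \<le> Re s \<longrightarrow> mrank (K s) = n)"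
    unfolding detectable_def K_def using A by simp
  also have "\<dots> \<longleftrightarrow> pbh_detectable A C"
    unfolding rk pbh_detectable_def using A C Kv by auto
  finally show ?thesis .
qed

section \<open>Stabilising output injection\<close>

lemma exists_swap_similarity:
  fixes C :: "'a :: comm_ring_1 mat"
  assumes C: "C \<in> carrier_mat p N" and j0: "j0 < N" and i0: "i0 < p"
  shows "\<exists>P. P \<in> carrier_mat N N \<and> P * P = 1\<^sub>m N \<and> (C * P) $$ (i0, 0) = C $$ (i0, j0)"
proof -
  define \<tau> where "\<tau> = (\<lambda>x::nat. if x = 0 then j0 else if x = j0 then 0 else x)"
  have tt: "\<tau> (\<tau> x) = x" for x unfolding \<tau>_def by auto
  have tN: "x < N \<Longrightarrow> \<tau> x < N" for x unfolding \<tau>_def using j0 by auto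
  define P :: "'a mat" where "P = mat N N (\<lambda>(a,b). if b = \<tau> a then 1 else 0)"
  have Pc: "P \<in> carrier_mat N N" unfolding P_def by simp
  have N0: "0 < N" using j0 by simp
  have "P * P = 1\<^sub>m N"
  proof (rule eq_matI)
    fix a b assume "a < dim_row (1\<^sub>m N :: 'a mat)" "b < dim_col (1\<^sub>m N :: 'a mat)"
    hence a: "a < N" and b: "b < N" by auto
    have "(P * P) $$ (a,b) = (\<Sum>l<N. if l = \<tau> a then (if b = \<tau> l then 1 else 0) else 0)"
      unfolding mult_mat_index_sum[OF Pc Pc a b] unfolding P_def by (rule sum.cong) (auto simp: a b)
    also have "\<dots> = 1\<^sub>m N $$ (a,b)" using tN[OF a] a b tt by auto
    finally show "(P * P) $$ (a,b) = 1\<^sub>m N $$ (a,b)" .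
  qed (simp_all add: P_def)
  moreover have "(C * P) $$ (i0, 0) = (\<Sum>l<N. if l = j0 then C $$ (i0,l) else 0)"
    unfolding mult_mat_index_sum[OF C Pc i0 N0] unfolding P_def
    by (rule sum.cong) (auto simp: N0 \<tau>_def)
  ultimately show ?thesis using Pc j0 by auto
qed

lemma exists_shear_similarity:
  fixes C :: "'a :: field mat"
  assumes C: "C \<in> carrier_mat p (Suc n)" and i0: "i0 < p" and c0: "C $$ (i0, 0) \<noteq> 0"
  shows "\<exists>R S. R \<in> carrier_mat (Suc n) (Suc n) \<and> S \<in> carrier_mat (Suc n) (Suc n) \<and> R * S = 1\<^sub>m (Suc n)
     \<and> (\<forall>j < Suc n. (C * S) $$ (i0, j) = (if j = 0 then 1 else 0))"
proof -
  define c where "c = (\<lambda>b. C $$ (i0, b))"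
  define R :: "'a mat" where "R = mat (Suc n) (Suc n) (\<lambda>(a,b). if a = 0 then c b else (if a = b then 1 else 0))"
  define S :: "'a mat" where "S = mat (Suc n) (Suc n) (\<lambda>(a,b).
      if a = 0 then (if b = 0 then 1 / c 0 else - c b / c 0) else (if a = b then 1 else 0))"
  have Rc: "R \<in> carrier_mat (Suc n) (Suc n)" and Sc: "S \<in> carrier_mat (Suc n) (Suc n)"
    unfolding R_def S_def by auto
  have cS: "(\<Sum>l<Suc n. c l * S $$ (l,b)) = (if b = 0 then 1 else 0)" if b: "b < Suc n" for b
  proof -
    have "(\<Sum>l<n. c (Suc l) * S $$ (Suc l, b)) = (\<Sum>l<n. if Suc l = b then c b else 0)"
      unfolding S_def by (rule sum.cong) (auto simp: b)
    also have "\<dots> = (if b = 0 then 0 else c b)" using b by (cases b) (auto simp: sum.delta)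
    finally show ?thesis using b c0 unfolding sum.lessThan_Suc_shift S_def c_def by auto
  qed
  have "R * S = 1\<^sub>m (Suc n)"
  proof (rule eq_matI)
    fix a b assume "a < dim_row (1\<^sub>m (Suc n) :: 'a mat)" "b < dim_col (1\<^sub>m (Suc n) :: 'a mat)"
    hence a: "a < Suc n" and b: "b < Suc n" by auto
    show "(R * S) $$ (a,b) = 1\<^sub>m (Suc n) $$ (a,b)"
    proof (cases "a = 0")
      case True
      have "(R * S) $$ (a,b) = (\<Sum>l<Suc n. c l * S $$ (l,b))"
        unfolding mult_mat_index_sum[OF Rc Sc a b] unfolding R_def by (rule sum.cong) (auto simp: True)
      thus ?thesis using cS[OF b] True b by simp
    next
      case False
      have "(R * S) $$ (a,b) = (\<Sum>l<Suc n. if l = a then S $$ (a,b) else 0)"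
        unfolding mult_mat_index_sum[OF Rc Sc a b] unfolding R_def by (rule sum.cong) (auto simp: False a)
      thus ?thesis using False a b unfolding S_def by simp
    qed
  qed (simp_all add: R_def S_def)
  moreover have "(C * S) $$ (i0, j) = (if j = 0 then 1 else 0)" if j: "j < Suc n" for j
    using mult_mat_index_sum[OF C Sc i0 j] cS[OF j] unfolding c_def by simp
  ultimately show ?thesis using Rc Sc by blast
qed

lemma exists_similarity_unit_output_row:
  fixes C :: "'a :: field mat"
  assumes C: "C \<in> carrier_mat p (Suc n)" and i0: "i0 < p" and j0: "j0 < Suc n" and cij: "C $$ (i0, j0) \<noteq> 0"
  shows "\<exists>R S. R \<in> carrier_mat (Suc n) (Suc n) \<and> S \<in> carrier_mat (Suc n) (Suc n) \<and> R * S = 1\<^sub>m (Suc n)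
     \<and> S * R = 1\<^sub>m (Suc n) \<and> (\<forall>j < Suc n. (C * S) $$ (i0, j) = (if j = 0 then 1 else 0))"
proof -
  obtain P where P: "P \<in> carrier_mat (Suc n) (Suc n)" and PP: "P * P = 1\<^sub>m (Suc n)"
    and CP: "(C * P) $$ (i0, 0) = C $$ (i0, j0)"
    using exists_swap_similarity[OF C j0 i0] by blast
  obtain R' S' where R': "R' \<in> carrier_mat (Suc n) (Suc n)" and S': "S' \<in> carrier_mat (Suc n) (Suc n)"
    and RS': "R' * S' = 1\<^sub>m (Suc n)" and row: "\<forall>j < Suc n. (C * P * S') $$ (i0, j) = (if j = 0 then 1 else 0)"
    using exists_shear_similarity[OF mult_carrier_mat[OF C P] i0] CP cij by metis
  have R: "R' * P \<in> carrier_mat (Suc n) (Suc n)" and S: "P * S' \<in> carrier_mat (Suc n) (Suc n)"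
    using R' S' P by auto
  have "R' * P * (P * S') = R' * (P * (P * S'))" by (rule assoc_mult_mat[OF R' P S])
  also have "P * (P * S') = P * P * S'" by (rule assoc_mult_mat[OF P P S', symmetric])
  also have "\<dots> = S'" using PP S' by simp
  finally have RS: "R' * P * (P * S') = 1\<^sub>m (Suc n)" using RS' by simp
  moreover have "P * S' * (R' * P) = 1\<^sub>m (Suc n)" by (rule mat_mult_left_right_inverse[OF R S RS])
  moreover have "\<forall>j < Suc n. (C * (P * S')) $$ (i0, j) = (if j = 0 then 1 else 0)"
    using row unfolding assoc_mult_mat[OF C P S'] .
  ultimately show ?thesis using R S by blast
qed

lemma pbh_detectable_reduced:
  fixes A C :: "real mat"
  assumes A: "A \<in> carrier_mat (Suc n) (Suc n)" and C: "C \<in> carrier_mat p (Suc n)"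
    and P: "pbh_detectable A C"
  shows "pbh_detectable (mat n n (\<lambda>(r,j). A $$ (Suc r, Suc j)))
    (mat (Suc p) n (\<lambda>(k,j). if k = 0 then A $$ (0, Suc j) else C $$ (k - 1, Suc j)))"
    (is "pbh_detectable ?A22 ?Cs")
proof (rule pbh_detectableI)
  show A22: "?A22 \<in> carrier_mat n n" and Cs: "?Cs \<in> carrier_mat (Suc p) n" by auto
  fix s v' assume s: "0 \<le> Re s" and v': "v' \<in> carrier_vec n" and ev: "cmat ?A22 *\<^sub>v v' = s \<cdot>\<^sub>v v'"
    and cv: "cmat ?Cs *\<^sub>v v' = 0\<^sub>v (Suc p)"
  define v where "v = vec (Suc n) (\<lambda>i. if i = 0 then 0 else v' $ (i - 1))"
  have vc: "v \<in> carrier_vec (Suc n)" unfolding v_def by simp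
  have shift: "(cmat B *\<^sub>v v) $ i = (\<Sum>j<n. complex_of_real (B $$ (i, Suc j)) * v' $ j)"
    if B: "B \<in> carrier_mat m (Suc n)" and i: "i < m" for B :: "real mat" and m i
    unfolding cmat_mult_vec_index_sum[OF B vc i] sum.lessThan_Suc_shift by (simp add: v_def)
  have Cs_row: "(\<Sum>j<n. complex_of_real (?Cs $$ (k, j)) * v' $ j) = 0" if "k < Suc p" for k
    using arg_cong[OF cv, of "\<lambda>x. x $ k"] cmat_mult_vec_index_sum[OF Cs v' that] that by simp
  have Av: "cmat A *\<^sub>v v = s \<cdot>\<^sub>v v"
  proof (rule eq_vecI)
    fix i assume "i < dim_vec (s \<cdot>\<^sub>v v)"
    hence i: "i < Suc n" using vc by simp
    show "(cmat A *\<^sub>v v) $ i = (s \<cdot>\<^sub>v v) $ i"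
    proof (cases i)
      case 0
      thus ?thesis using shift[OF A i] Cs_row[of 0] vc by (simp add: v_def)
    next
      case (Suc r)
      hence r: "r < n" using i by simp
      have "(\<Sum>j<n. complex_of_real (A $$ (Suc r, Suc j)) * v' $ j) = s * v' $ r"
        using arg_cong[OF ev, of "\<lambda>x. x $ r"] cmat_mult_vec_index_sum[OF A22 v' r] r v' by simp
      thus ?thesis using shift[OF A i] Suc vc r by (simp add: v_def)
    qed
  qed (use A vc in simp)
  have Cv: "cmat C *\<^sub>v v = 0\<^sub>v p"
  proof (rule eq_vecI)
    fix k assume "k < dim_vec (0\<^sub>v p)"
    hence k: "k < p" by simp
    show "(cmat C *\<^sub>v v) $ k = 0\<^sub>v p $ k" using shift[OF C k] Cs_row[of "Suc k"] k by simp
  qed (use C in simp)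
  have v0: "v = 0\<^sub>v (Suc n)" by (rule pbh_detectableD[OF P A C s vc Av Cv])
  show "v' = 0\<^sub>v n"
  proof (rule eq_vecI)
    fix r assume "r < dim_vec (0\<^sub>v n)"
    thus "v' $ r = 0\<^sub>v n $ r" using arg_cong[OF v0, of "\<lambda>x. x $ Suc r"] by (simp add: v_def)
  qed (use v' in simp)
qed

lemma extended_gain_mult_entries:
  fixes L' C :: "real mat" and c :: real and g :: "nat \<Rightarrow> real" and n :: nat
  assumes C: "C \<in> carrier_mat p m" and i0: "i0 < p" and j: "j < m"
  defines "L \<equiv> mat (Suc n) p (\<lambda>(i,k). if i = 0 then (if k = i0 then c else 0)
      else L' $$ (i - 1, Suc k) + (if k = i0 then g (i - 1) else 0))"
  shows "(L * C) $$ (0, j) = c * C $$ (i0, j)"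
    and "r < n \<Longrightarrow> (L * C) $$ (Suc r, j) = (\<Sum>k<p. L' $$ (r, Suc k) * C $$ (k, j)) + g r * C $$ (i0, j)"
proof -
  have Lc: "L \<in> carrier_mat (Suc n) p" unfolding L_def by simp
  have "(L * C) $$ (0, j) = (\<Sum>k<p. L $$ (0,k) * C $$ (k,j))"
    by (rule mult_mat_index_sum[OF Lc C _ j]) simp
  also have "\<dots> = (\<Sum>k<p. if k = i0 then c * C $$ (k,j) else 0)"
    unfolding L_def by (rule sum.cong) simp_all
  finally show "(L * C) $$ (0, j) = c * C $$ (i0, j)" using i0 by simp
  assume r: "r < n"
  have "(L * C) $$ (Suc r, j) = (\<Sum>k<p. L $$ (Suc r,k) * C $$ (k,j))"
    by (rule mult_mat_index_sum[OF Lc C _ j]) (simp add: r)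
  also have "\<dots> = (\<Sum>k<p. L' $$ (r, Suc k) * C $$ (k, j) + (if k = i0 then g r * C $$ (k,j) else 0))"
    unfolding L_def by (rule sum.cong) (simp_all add: r distrib_right)
  finally show "(L * C) $$ (Suc r, j) = (\<Sum>k<p. L' $$ (r, Suc k) * C $$ (k, j)) + g r * C $$ (i0, j)"
    using i0 by (simp add: sum.distrib)
qed

(* The first row of L moves the (0,0) entry of A - L C
   to -1; the other rows are those of the gain L' of the reduced pair, corrected through output i0,
   so that A - L C takes the bordered form of hurwitz_bordered with H = A22 - L' Cs. *)
lemma hurwitz_output_injection_step:
  fixes A C L' :: "real mat"
  assumes A: "A \<in> carrier_mat (Suc n) (Suc n)" and C: "C \<in> carrier_mat p (Suc n)" and i0: "i0 < p"
    and rowC: "\<And>j. j < Suc n \<Longrightarrow> C $$ (i0, j) = (if j = 0 then 1 else 0)"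
    and L': "L' \<in> carrier_mat n (Suc p)"
    and hH: "hurwitz (mat n n (\<lambda>(r,j). A $$ (Suc r, Suc j))
      - L' * mat (Suc p) n (\<lambda>(k,j). if k = 0 then A $$ (0, Suc j) else C $$ (k - 1, Suc j)))"
      (is "hurwitz (?A22 - L' * ?Cs)")
  shows "\<exists>L. L \<in> carrier_mat (Suc n) p \<and> hurwitz (A - L * C)"
proof -
  define H where "H = ?A22 - L' * ?Cs"
  have Hc: "H \<in> carrier_mat n n" unfolding H_def using L' by auto
  define f where "f = (\<lambda>r. L' $$ (r, 0))"
  define a where "a = (\<lambda>j. A $$ (0, Suc j))"
  have Hrj: "H $$ (r,j) = A $$ (Suc r, Suc j) - f r * a j - (\<Sum>k<p. L' $$ (r, Suc k) * C $$ (k, Suc j))"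
    if r: "r < n" and j: "j < n" for r j
  proof -
    have "(L' * ?Cs) $$ (r,j) = (\<Sum>k<Suc p. L' $$ (r,k) * ?Cs $$ (k,j))"
      by (rule mult_mat_index_sum[OF L' _ r j]) simp
    also have "\<dots> = f r * a j + (\<Sum>k<p. L' $$ (r, Suc k) * C $$ (k, Suc j))"
      unfolding sum.lessThan_Suc_shift by (simp add: f_def a_def j)
    finally show ?thesis unfolding H_def using r j L' by simp
  qed
  define g0 where "g0 = A $$ (0,0) + 1 + (\<Sum>j<n. a j * f j)"
  define g where "g = (\<lambda>r. A $$ (Suc r, 0) - (\<Sum>k<p. L' $$ (r, Suc k) * C $$ (k, 0)) + f r
      + (\<Sum>j<n. (H $$ (r,j) + f r * a j) * f j))"
  define L where "L = mat (Suc n) p (\<lambda>(i,k). if i = 0 then (if k = i0 then g0 else 0)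
      else L' $$ (i - 1, Suc k) + (if k = i0 then g (i - 1) else 0))"
  note LC = extended_gain_mult_entries[where n = n and c = g0 and L' = L' and g = g, OF C i0, folded L_def]
  have Lc: "L \<in> carrier_mat (Suc n) p" unfolding L_def by simp
  define M where "M = A - L * C"
  have Mc: "M \<in> carrier_mat (Suc n) (Suc n)" unfolding M_def by (rule minus_carrier_mat[OF mult_carrier_mat[OF Lc C]])
  have Mij: "M $$ (i,j) = A $$ (i,j) - (L * C) $$ (i,j)" if "i < Suc n" "j < Suc n" for i j
    unfolding M_def using that A Lc C by simp
  have "hurwitz M"
  proof (rule hurwitz_bordered[OF Hc hH[folded H_def] Mc])
    show "M $$ (0, 0) = - 1 - (\<Sum>j<n. a j * f j)"
      using Mij[of 0 0] LC(1)[of 0] rowC[of 0] unfolding g0_def by simp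
    show "M $$ (0, Suc j) = a j" if j: "j < n" for j
      using Mij[of 0 "Suc j"] LC(1)[of "Suc j"] rowC[of "Suc j"] j unfolding a_def by simp
    show "M $$ (Suc r, Suc j) = H $$ (r, j) + f r * a j" if r: "r < n" and j: "j < n" for r j
      using Mij[of "Suc r" "Suc j"] LC(2)[of "Suc j" r] rowC[of "Suc j"] Hrj[OF r j] r j by simp
    show "M $$ (Suc r, 0) = - f r - (\<Sum>j<n. (H $$ (r, j) + f r * a j) * f j)" if r: "r < n" for r
      using Mij[of "Suc r" 0] LC(2)[of 0 r] rowC[of 0] r unfolding g_def by simp
  qed
  thus ?thesis using Lc unfolding M_def by blast
qed

lemma hurwitz_output_injection_similar:
  assumes R: "R \<in> carrier_mat n n" and S: "S \<in> carrier_mat n n" and A: "A \<in> carrier_mat n n"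
    and C: "C \<in> carrier_mat p n" and L: "L \<in> carrier_mat n p"
    and SR: "S * R = 1\<^sub>m n" and RS: "R * S = 1\<^sub>m n"
    and h: "hurwitz (R * A * S - L * (C * S))"
  shows "hurwitz (A - S * L * C)"
proof (rule hurwitz_similar[OF R S _ SR])
  have LC: "L * C \<in> carrier_mat n n" and SLC: "S * L * C \<in> carrier_mat n n" using S L C by auto
  have "R * (S * L * C) = (R * S) * (L * C)"
    using assoc_mult_mat[OF S L C] assoc_mult_mat[OF R S LC] by simp
  hence RSLC: "R * (S * L * C) * S = L * (C * S)"
    using RS LC assoc_mult_mat[OF L C S] left_mult_one_mat[OF LC] by simp
  have "R * (A - S * L * C) * S = (R * A - R * (S * L * C)) * S"
    using mult_minus_distrib_mat[OF R A SLC] by simp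
  also have "\<dots> = R * A * S - L * (C * S)"
    unfolding RSLC[symmetric]
    by (rule minus_mult_distrib_mat[OF mult_carrier_mat[OF R A] mult_carrier_mat[OF R SLC] S])
  finally show "hurwitz (R * (A - S * L * C) * S)" using h by simp
qed (use S L C in \<open>simp add: minus_carrier_mat\<close>)

lemma exists_hurwitz_output_injection:
  "A \<in> carrier_mat n n \<Longrightarrow> C \<in> carrier_mat p n \<Longrightarrow> pbh_detectable A C
    \<Longrightarrow> \<exists>L. L \<in> carrier_mat n p \<and> hurwitz (A - L * C)"
proof (induction n arbitrary: A C p)
  case 0
  have "A - 0\<^sub>m 0 p * C \<in> carrier_mat 0 0"
    by (rule minus_carrier_mat[OF mult_carrier_mat[OF zero_carrier_mat "0.prems"(2)]])
  thus ?case using hurwitz_empty zero_carrier_mat by blast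
next
  case (Suc n)
  note A = Suc.prems(1) and C = Suc.prems(2) and P = Suc.prems(3)
  show ?case
  proof (cases "C = 0\<^sub>m p (Suc n)")
    case True
    have "A - 0\<^sub>m (Suc n) p * C = A" using A C by (intro eq_matI) auto
    thus ?thesis using pbh_detectable_zero_output_imp_hurwitz[OF A] P True zero_carrier_mat by metis
  next
    case False
    obtain i0 j0 where i0: "i0 < p" and j0: "j0 < Suc n" and cij: "C $$ (i0, j0) \<noteq> 0"
      using False C by (metis carrier_matD eq_matI index_zero_mat)
    obtain R S where R: "R \<in> carrier_mat (Suc n) (Suc n)" and S: "S \<in> carrier_mat (Suc n) (Suc n)"
      and RS: "R * S = 1\<^sub>m (Suc n)" and SR: "S * R = 1\<^sub>m (Suc n)"
      and row: "\<forall>j < Suc n. (C * S) $$ (i0, j) = (if j = 0 then 1 else 0)"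
      using exists_similarity_unit_output_row[OF C i0 j0 cij] by blast
    have A': "R * A * S \<in> carrier_mat (Suc n) (Suc n)" and C': "C * S \<in> carrier_mat p (Suc n)"
      using R A S C by auto
    have P': "pbh_detectable (R * A * S) (C * S)" by (rule pbh_detectable_similar[OF R S A C SR RS P])
    obtain L' where L': "L' \<in> carrier_mat n (Suc p)" and "hurwitz (mat n n (\<lambda>(r,j). (R * A * S) $$ (Suc r, Suc j))
      - L' * mat (Suc p) n (\<lambda>(k,j). if k = 0 then (R * A * S) $$ (0, Suc j) else (C * S) $$ (k - 1, Suc j)))"
      using Suc.IH[OF mat_carrier mat_carrier pbh_detectable_reduced[OF A' C' P']] by blast
    then obtain L where L: "L \<in> carrier_mat (Suc n) p" and hL: "hurwitz (R * A * S - L * (C * S))"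
      using hurwitz_output_injection_step[OF A' C' i0 _ L'] row by blast
    have "hurwitz (A - S * L * C)" by (rule hurwitz_output_injection_similar[OF R S A C L SR RS hL])
    thus ?thesis using S L by (metis mult_carrier_mat)
  qed
qed

section \<open>Observer coordinates\<close>

lemma unit_rows_mult_vec:
  "v1 \<in> carrier_vec p \<Longrightarrow> v2 \<in> carrier_vec n \<Longrightarrow>
    cmat (mat p (p + n) (\<lambda>(i, j). if i = j then 1 else 0)) *\<^sub>v (v1 @\<^sub>v v2) = v1"
proof (rule eq_vecI)
  fix i assume v1: "v1 \<in> carrier_vec p" and v2: "v2 \<in> carrier_vec n" and "i < dim_vec v1"
  hence i: "i < p" by simp
  let ?M = "mat p (p + n) (\<lambda>(i, j). if i = j then 1 else (0::real))"
  have "(cmat ?M *\<^sub>v (v1 @\<^sub>v v2)) $ i = (\<Sum>j<p + n. complex_of_real (?M $$ (i,j)) * (v1 @\<^sub>v v2) $ j)"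
    by (rule cmat_mult_vec_index_sum) (use v1 v2 i in auto)
  also have "\<dots> = (\<Sum>j<p + n. if j = i then v1 $ i else 0)" using v1 i by (intro sum.cong) auto
  finally show "(cmat ?M *\<^sub>v (v1 @\<^sub>v v2)) $ i = v1 $ i" using i by simp
qed simp

lemma cmat_four_block_mult_vec_zero_first:
  assumes "A11 \<in> carrier_mat p p" "A12 \<in> carrier_mat p n" "A21 \<in> carrier_mat n p" "A22 \<in> carrier_mat n n"
    and z2: "z2 \<in> carrier_vec n"
  shows "cmat (four_block_mat A11 A12 A21 A22) *\<^sub>v (0\<^sub>v p @\<^sub>v z2) = (cmat A12 *\<^sub>v z2) @\<^sub>v (cmat A22 *\<^sub>v z2)"
proof -
  have "cmat A11 *\<^sub>v 0\<^sub>v p = 0\<^sub>v p" "cmat A21 *\<^sub>v 0\<^sub>v p = 0\<^sub>v n" using assms(1,3) by auto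
  moreover have "cmat A12 *\<^sub>v z2 \<in> carrier_vec p" "cmat A22 *\<^sub>v z2 \<in> carrier_vec n" using assms by auto
  ultimately show ?thesis using assms unfolding cmat_four_block_mat[OF assms(1-4)]
    by (subst four_block_mat_mult_vec[of _ p p _ n _ n]) auto
qed

lemma pbh_detectable_unit_output_block_iff:
  fixes A11 A12 A21 A22 :: "real mat"
  assumes A11: "A11 \<in> carrier_mat p p" and A12: "A12 \<in> carrier_mat p n"
    and A21: "A21 \<in> carrier_mat n p" and A22: "A22 \<in> carrier_mat n n"
  shows "pbh_detectable (four_block_mat A11 A12 A21 A22) (mat p (p + n) (\<lambda>(i, j). if i = j then 1 else 0))
    \<longleftrightarrow> pbh_detectable A22 A12" (is "pbh_detectable ?A ?C \<longleftrightarrow> _")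
proof
  have A: "?A \<in> carrier_mat (p + n) (p + n)" and C: "?C \<in> carrier_mat p (p + n)" using A11 A22 by auto
  note Az = cmat_four_block_mult_vec_zero_first[OF A11 A12 A21 A22]
  have cA12: "cmat A12 *\<^sub>v z2 \<in> carrier_vec p" if "z2 \<in> carrier_vec n" for z2 using A12 that by simp
  {
    assume P: "pbh_detectable ?A ?C"
    show "pbh_detectable A22 A12"
    proof (rule pbh_detectableI[OF A22 A12])
      fix s z2 assume s: "0 \<le> Re s" and z2: "z2 \<in> carrier_vec n" and ev: "cmat A22 *\<^sub>v z2 = s \<cdot>\<^sub>v z2"
        and Cz: "cmat A12 *\<^sub>v z2 = 0\<^sub>v p"
      have "s \<cdot>\<^sub>v 0\<^sub>v p = (0\<^sub>v p :: complex vec)" by (intro eq_vecI) auto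
      hence ev': "cmat ?A *\<^sub>v (0\<^sub>v p @\<^sub>v z2) = s \<cdot>\<^sub>v (0\<^sub>v p @\<^sub>v z2)"
        unfolding Az[OF z2] smult_vec_append[OF zero_carrier_vec z2] Cz ev by simp
      have Cz': "cmat ?C *\<^sub>v (0\<^sub>v p @\<^sub>v z2) = 0\<^sub>v p" using unit_rows_mult_vec z2 by simp
      have "0\<^sub>v p @\<^sub>v z2 = 0\<^sub>v (p + n)" by (rule pbh_detectableD[OF P A C s _ ev' Cz']) (use z2 in simp)
      hence "0\<^sub>v p @\<^sub>v z2 = 0\<^sub>v p @\<^sub>v 0\<^sub>v n" unfolding zero_vec_append .
      thus "z2 = 0\<^sub>v n" using append_vec_eq[of "0\<^sub>v p :: complex vec" p "0\<^sub>v p" z2 "0\<^sub>v n"] by simp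
    qed
  }
  assume P: "pbh_detectable A22 A12"
  show "pbh_detectable ?A ?C"
  proof (rule pbh_detectableI[OF A C])
    fix s z assume s: "0 \<le> Re s" and z: "z \<in> carrier_vec (p + n)" and ev: "cmat ?A *\<^sub>v z = s \<cdot>\<^sub>v z"
      and Cz: "cmat ?C *\<^sub>v z = 0\<^sub>v p"
    define z2 where "z2 = vec_last z n"
    have z2c: "z2 \<in> carrier_vec n" unfolding z2_def by simp
    have "z = vec_first z p @\<^sub>v z2" unfolding z2_def using vec_first_last_append[OF z] by simp
    moreover have "vec_first z p = 0\<^sub>v p"
      using Cz unit_rows_mult_vec[of "vec_first z p" p z2 n] z2c calculation by simp
    ultimately have zz: "z = 0\<^sub>v p @\<^sub>v z2" by simp
    have "s \<cdot>\<^sub>v 0\<^sub>v p = (0\<^sub>v p :: complex vec)" by (intro eq_vecI) auto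
    hence "(cmat A12 *\<^sub>v z2) @\<^sub>v (cmat A22 *\<^sub>v z2) = 0\<^sub>v p @\<^sub>v (s \<cdot>\<^sub>v z2)"
      using ev unfolding zz Az[OF z2c] smult_vec_append[OF zero_carrier_vec z2c] by simp
    hence "cmat A12 *\<^sub>v z2 = 0\<^sub>v p" and "cmat A22 *\<^sub>v z2 = s \<cdot>\<^sub>v z2"
      using append_vec_eq[OF cA12[OF z2c] zero_carrier_vec] by auto
    hence "z2 = 0\<^sub>v n" using pbh_detectableD[OF P A22 A12 s z2c] by blast
    thus "z = 0\<^sub>v (p + n)" unfolding zz zero_vec_append by simp
  qed
qed

lemma pbh_detectable_similar_iff:
  assumes A: "A \<in> carrier_mat n n" and C: "C \<in> carrier_mat p n" and T: "T \<in> carrier_mat n n"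
    and Ti: "Tinv \<in> carrier_mat n n" and TTi: "T * Tinv = 1\<^sub>m n" and TiT: "Tinv * T = 1\<^sub>m n"
  shows "pbh_detectable A C \<longleftrightarrow> pbh_detectable (Tinv * A * T) (C * T)"
proof
  assume "pbh_detectable A C"
  thus "pbh_detectable (Tinv * A * T) (C * T)" by (rule pbh_detectable_similar[OF Ti T A C TTi TiT])
next
  assume P: "pbh_detectable (Tinv * A * T) (C * T)"
  have AT: "A * T \<in> carrier_mat n n" using A T by simp
  have "T * (Tinv * A * T) = (T * Tinv) * (A * T)"
    using assoc_mult_mat[OF Ti A T] assoc_mult_mat[OF T Ti AT] by simp
  hence "T * (Tinv * A * T) = A * T" unfolding TTi using left_mult_one_mat[OF AT] by simp
  hence "T * (Tinv * A * T) * Tinv = A"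
    using assoc_mult_mat[OF A T Ti] TTi right_mult_one_mat[OF A] by simp
  moreover have "C * T * Tinv = C" using assoc_mult_mat[OF C T Ti] TTi C by simp
  moreover have "pbh_detectable (T * (Tinv * A * T) * Tinv) (C * T * Tinv)"
    by (rule pbh_detectable_similar[OF T Ti _ _ TiT TTi P]) (use Ti A T C in auto)
  ultimately show "pbh_detectable A C" by simp
qed

lemma detectable_iff_pbh_detectable_block:
  assumes A: "A \<in> carrier_mat n n" and C: "C \<in> carrier_mat p n" and pn: "p \<le> n"
    and T: "T \<in> carrier_mat n n" and Ti: "Tinv \<in> carrier_mat n n"
    and TTi: "T * Tinv = 1\<^sub>m n" and TiT: "Tinv * T = 1\<^sub>m n"
    and CT: "C * T = mat p n (\<lambda>(i, j). if i = j then 1 else 0)"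
    and sb: "split_block (Tinv * A * T) p p = (A11, A12, A21, A22)"
  shows "A12 \<in> carrier_mat p (n - p)" "A22 \<in> carrier_mat (n - p) (n - p)"
    and "detectable A C \<longleftrightarrow> pbh_detectable A22 A12"
proof -
  have n: "n = p + (n - p)" using pn by simp
  have "dim_row (Tinv * A * T) = p + (n - p)" "dim_col (Tinv * A * T) = p + (n - p)"
    using Ti T n by auto
  note spl = split_block[OF sb this]
  show "A12 \<in> carrier_mat p (n - p)" "A22 \<in> carrier_mat (n - p) (n - p)" using spl by auto
  have CT': "C * T = mat p (p + (n - p)) (\<lambda>(i, j). if i = j then 1 else 0)" using CT n by simp
  show "detectable A C \<longleftrightarrow> pbh_detectable A22 A12"
    unfolding detectable_iff_pbh_detectable[OF A C] pbh_detectable_similar_iff[OF A C T Ti TTi TiT] spl(5) CT'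
    by (rule pbh_detectable_unit_output_block_iff[OF spl(1-4)])
qed

section \<open>Reduced order PI observers\<close>

(* A PI observer for (A22, A12) is an ordinary observer for the state (z2, w) with dw/dt = 0 and
   w entering through F: a gain [L; G] for this augmented pair produces exactly the error matrix
   of ro_pi_observer (aug_closed_loop_eq). *)
definition aug_state_mat :: "real mat \<Rightarrow> real mat \<Rightarrow> real mat" where
  "aug_state_mat A22 F = four_block_mat A22 F (0\<^sub>m (dim_col F) (dim_row A22)) (0\<^sub>m (dim_col F) (dim_col F))"

definition aug_output_mat :: "real mat \<Rightarrow> nat \<Rightarrow> real mat" where
  "aug_output_mat A12 k = four_block_mat A12 (0\<^sub>m (dim_row A12) k) (0\<^sub>m 0 (dim_col A12)) (0\<^sub>m 0 k)"

lemma aug_closed_loop_eq: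
  assumes A12: "A12 \<in> carrier_mat p n" and A22: "A22 \<in> carrier_mat n n" and F: "F \<in> carrier_mat n k"
    and Lb: "Lb \<in> carrier_mat (n + k) p"
  shows "\<exists>L G. L \<in> carrier_mat n p \<and> G \<in> carrier_mat k p \<and>
    aug_state_mat A22 F - Lb * aug_output_mat A12 k = four_block_mat (A22 - L * A12) F (- (G * A12)) (0\<^sub>m k k)"
proof -
  obtain L X G Z where sb: "split_block Lb n p = (L, X, G, Z)" by (metis prod_cases4)
  have dims: "dim_row Lb = n + k" "dim_col Lb = p + 0" using Lb by auto
  note spl = split_block[OF sb dims]
  have "Lb * aug_output_mat A12 k = four_block_mat (L * A12 + X * 0\<^sub>m 0 n) (L * 0\<^sub>m p k + X * 0\<^sub>m 0 k)
      (G * A12 + Z * 0\<^sub>m 0 n) (G * 0\<^sub>m p k + Z * 0\<^sub>m 0 k)"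
    unfolding spl(5) aug_output_mat_def using A12 spl(1-4) by (subst mult_four_block_mat) auto
  hence "aug_state_mat A22 F - Lb * aug_output_mat A12 k = four_block_mat (A22 - L * A12) F (- (G * A12)) (0\<^sub>m k k)"
    unfolding aug_state_mat_def using A12 A22 F spl(1-4) by (intro eq_matI) auto
  thus ?thesis using spl(1,3) by blast
qed

lemma cmat_aug_state_mult_vec:
  assumes A22: "A22 \<in> carrier_mat n n" and F: "F \<in> carrier_mat n k"
    and v1: "v1 \<in> carrier_vec n" and v2: "v2 \<in> carrier_vec k"
  shows "cmat (aug_state_mat A22 F) *\<^sub>v (v1 @\<^sub>v v2) = (cmat A22 *\<^sub>v v1 + cmat F *\<^sub>v v2) @\<^sub>v 0\<^sub>v k"
proof -
  have "0\<^sub>m k n *\<^sub>v v1 + 0\<^sub>m k k *\<^sub>v v2 = (0\<^sub>v k :: complex vec)" using v1 v2 by auto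
  thus ?thesis unfolding aug_state_mat_def using A22 F v1 v2
    by (simp add: cmat_four_block_mat[OF A22 F zero_carrier_mat zero_carrier_mat]
        four_block_mat_mult_vec[of _ n n _ k _ k])
qed

lemma cmat_aug_output_mult_vec:
  assumes A12: "A12 \<in> carrier_mat p n" and v1: "v1 \<in> carrier_vec n" and v2: "v2 \<in> carrier_vec k"
  shows "cmat (aug_output_mat A12 k) *\<^sub>v (v1 @\<^sub>v v2) = cmat A12 *\<^sub>v v1"
proof -
  have "cmat A12 *\<^sub>v v1 + 0\<^sub>m p k *\<^sub>v v2 = cmat A12 *\<^sub>v v1" using A12 v1 v2 by auto
  moreover have "(0\<^sub>m 0 n *\<^sub>v v1 + 0\<^sub>m 0 k *\<^sub>v v2 :: complex vec) \<in> carrier_vec 0"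
    by (rule carrier_vecI) simp
  ultimately show ?thesis unfolding aug_output_mat_def using A12 v1 v2
    by (simp add: cmat_four_block_mat[OF A12 zero_carrier_mat zero_carrier_mat zero_carrier_mat]
        four_block_mat_mult_vec[of _ p n _ k _ 0] append_vec_carrier_0)
qed

(* This is where F = H0 Y enters: at s = 0 the eigen-equation of the augmented pair reads
   H0 (v1 + Y v2) = 0. *)
lemma hurwitz_aug_kernel_trivial:
  fixes H0 A12 Y :: "real mat"
  assumes H0: "H0 \<in> carrier_mat n n" and h0: "hurwitz H0" and A12: "A12 \<in> carrier_mat p n"
    and Y: "Y \<in> carrier_mat n k"
    and inj: "\<And>w. w \<in> carrier_vec k \<Longrightarrow> (A12 * Y) *\<^sub>v w = 0\<^sub>v p \<Longrightarrow> w = 0\<^sub>v k"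
    and v1: "v1 \<in> carrier_vec n" and v2: "v2 \<in> carrier_vec k"
    and e1: "cmat H0 *\<^sub>v v1 + cmat (H0 * Y) *\<^sub>v v2 = 0\<^sub>v n" and e2: "cmat A12 *\<^sub>v v1 = 0\<^sub>v p"
  shows "v1 = 0\<^sub>v n \<and> v2 = 0\<^sub>v k"
proof -
  have cA12: "cmat A12 \<in> carrier_mat p n" and cY: "cmat Y \<in> carrier_mat n k" and cH0: "cmat H0 \<in> carrier_mat n n"
    using A12 Y H0 by auto
  have Yv2: "cmat Y *\<^sub>v v2 \<in> carrier_vec n" using cY v2 by simp
  have "cmat H0 *\<^sub>v (v1 + cmat Y *\<^sub>v v2) = 0\<^sub>v n"
    using e1 cH0 cY v1 v2 unfolding cmat_mult[OF H0 Y] by (simp add: mult_add_distrib_mat_vec)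
  hence sum0: "v1 + cmat Y *\<^sub>v v2 = 0\<^sub>v n" using hurwitz_cmat_kernel_trivial[OF h0 H0] v1 Yv2 by simp
  have "cmat A12 *\<^sub>v (cmat Y *\<^sub>v v2) = cmat A12 *\<^sub>v (v1 + cmat Y *\<^sub>v v2)"
    using mult_add_distrib_mat_vec[OF cA12 v1 Yv2] e2 cA12 Yv2 by simp
  also have "\<dots> = 0\<^sub>v p" unfolding sum0 using cA12 by auto
  finally have "cmat (A12 * Y) *\<^sub>v v2 = 0\<^sub>v p" unfolding cmat_mult[OF A12 Y] using cA12 cY v2 by simp
  hence v20: "v2 = 0\<^sub>v k" using cmat_kernel_trivial[OF mult_carrier_mat[OF A12 Y] inj v2] by blast
  moreover have "cmat Y *\<^sub>v 0\<^sub>v k = 0\<^sub>v n" using cY by auto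
  ultimately show ?thesis using sum0 v1 by simp
qed

lemma pbh_detectable_aug:
  fixes A12 A22 L0 Y :: "real mat"
  assumes A12: "A12 \<in> carrier_mat p n" and A22: "A22 \<in> carrier_mat n n" and P: "pbh_detectable A22 A12"
    and L0: "L0 \<in> carrier_mat n p" and h0: "hurwitz (A22 - L0 * A12)" and Y: "Y \<in> carrier_mat n k"
    and inj: "\<And>w. w \<in> carrier_vec k \<Longrightarrow> (A12 * Y) *\<^sub>v w = 0\<^sub>v p \<Longrightarrow> w = 0\<^sub>v k"
  shows "pbh_detectable (aug_state_mat A22 ((A22 - L0 * A12) * Y)) (aug_output_mat A12 k)"
proof -
  define H0 where "H0 = A22 - L0 * A12"
  define F where "F = H0 * Y"
  have H0: "H0 \<in> carrier_mat n n" and F: "F \<in> carrier_mat n k" unfolding H0_def F_def using L0 A12 Y by auto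
  have cA12: "cmat A12 \<in> carrier_mat p n" and cA22: "cmat A22 \<in> carrier_mat n n" and cF: "cmat F \<in> carrier_mat n k"
    and cL0: "cmat L0 \<in> carrier_mat n p"
    using A12 A22 F L0 by auto
  show ?thesis unfolding H0_def[symmetric] F_def[symmetric]
  proof (rule pbh_detectableI)
    show "aug_state_mat A22 F \<in> carrier_mat (n + k) (n + k)" "aug_output_mat A12 k \<in> carrier_mat p (n + k)"
      unfolding aug_state_mat_def aug_output_mat_def using A22 F A12 by auto
    fix s v assume s: "0 \<le> Re s" and v: "v \<in> carrier_vec (n + k)"
      and ev: "cmat (aug_state_mat A22 F) *\<^sub>v v = s \<cdot>\<^sub>v v" and cv: "cmat (aug_output_mat A12 k) *\<^sub>v v = 0\<^sub>v p"
    define v1 where "v1 = vec_first v n"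
    define v2 where "v2 = vec_last v k"
    have v1: "v1 \<in> carrier_vec n" and v2: "v2 \<in> carrier_vec k" unfolding v1_def v2_def by auto
    have vv: "v = v1 @\<^sub>v v2" unfolding v1_def v2_def using v by simp
    have "(cmat A22 *\<^sub>v v1 + cmat F *\<^sub>v v2) @\<^sub>v 0\<^sub>v k = (s \<cdot>\<^sub>v v1) @\<^sub>v (s \<cdot>\<^sub>v v2)"
      using ev unfolding vv cmat_aug_state_mult_vec[OF A22 F v1 v2] smult_vec_append[OF v1 v2] .
    moreover have "cmat A22 *\<^sub>v v1 + cmat F *\<^sub>v v2 \<in> carrier_vec n" using cA22 cF v1 v2 by simp
    ultimately have e1: "cmat A22 *\<^sub>v v1 + cmat F *\<^sub>v v2 = s \<cdot>\<^sub>v v1" and e2: "0\<^sub>v k = s \<cdot>\<^sub>v v2"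
      using append_vec_eq[of _ n "s \<cdot>\<^sub>v v1"] v1 by auto
    have e3: "cmat A12 *\<^sub>v v1 = 0\<^sub>v p" using cv unfolding vv cmat_aug_output_mult_vec[OF A12 v1 v2] .
    have "v1 = 0\<^sub>v n \<and> v2 = 0\<^sub>v k"
    proof (cases "s = 0")
      case True
      have "cmat L0 *\<^sub>v 0\<^sub>v p = 0\<^sub>v n" using cL0 by auto
      hence "cmat H0 *\<^sub>v v1 = cmat A22 *\<^sub>v v1"
        unfolding H0_def cmat_minus[OF A22 mult_carrier_mat[OF L0 A12]] cmat_mult[OF L0 A12]
        using cA22 cL0 cA12 v1 e3 by (simp add: minus_mult_distrib_mat_vec)
      hence "cmat H0 *\<^sub>v v1 + cmat (H0 * Y) *\<^sub>v v2 = 0\<^sub>v n"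
        using e1 True v1 unfolding F_def by (auto intro!: eq_vecI)
      thus ?thesis using hurwitz_aug_kernel_trivial[OF H0 h0[folded H0_def] A12 Y inj v1 v2 _ e3] by blast
    next
      case False
      have v20: "v2 = 0\<^sub>v k" using e2 False v2 by (auto intro!: eq_vecI dest!: vec_eq_iff[THEN iffD1])
      moreover have "cmat F *\<^sub>v 0\<^sub>v k = 0\<^sub>v n" using cF by auto
      ultimately have "cmat A22 *\<^sub>v v1 = s \<cdot>\<^sub>v v1" using e1 cA22 v1 by simp
      hence "v1 = 0\<^sub>v n" by (rule pbh_detectableD[OF P A22 A12 s v1 _ e3])
      thus ?thesis using v20 by simp
    qed
    thus "v = 0\<^sub>v (n + k)" unfolding vv zero_vec_append by simp
  qed
qed

lemma rank_gain_if_hurwitz_pi_error: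
  fixes H F G A12 :: "real mat"
  assumes H: "H \<in> carrier_mat n n" and F: "F \<in> carrier_mat n k" and G: "G \<in> carrier_mat k p"
    and A12: "A12 \<in> carrier_mat p n" and h: "hurwitz (four_block_mat H F (- (G * A12)) (0\<^sub>m k k))"
  shows "mrank G = k"
proof -
  define M where "M = four_block_mat H F (- (G * A12)) (0\<^sub>m k k)"
  have GA: "- (G * A12) \<in> carrier_mat k n" using G A12 by simp
  have M: "M \<in> carrier_mat (n + k) (n + k)" unfolding M_def using H by simp
  obtain Mi where Mi: "Mi \<in> carrier_mat (n + k) (n + k)" and MMi: "M * Mi = 1\<^sub>m (n + k)"
    using det_non_zero_imp_unit[OF M hurwitz_det_nonzero[OF h[folded M_def] M]]
    unfolding Units_def by (auto simp: ring_mat_simps)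
  obtain Z1 Z2 Z3 Z4 where sb: "split_block Mi n n = (Z1, Z2, Z3, Z4)" by (metis prod_cases4)
  have dims: "dim_row Mi = n + k" "dim_col Mi = n + k" using Mi by auto
  note spl = split_block[OF sb dims]
  have "M * Mi = four_block_mat (H * Z1 + F * Z3) (H * Z2 + F * Z4)
      (- (G * A12) * Z1 + 0\<^sub>m k k * Z3) (- (G * A12) * Z2 + 0\<^sub>m k k * Z4)"
    unfolding M_def spl(5) by (rule mult_four_block_mat[OF H F GA zero_carrier_mat spl(1-4)])
  hence "(- (G * A12) * Z2 + 0\<^sub>m k k * Z4) $$ (i, j) = 1\<^sub>m k $$ (i, j)" if "i < k" "j < k" for i j
    using arg_cong[OF MMi, of "\<lambda>X. X $$ (n + i, n + j)"] that H F spl(1-4) by simp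
  moreover have "G * (- (A12 * Z2)) = - (G * A12) * Z2 + 0\<^sub>m k k * Z4"
    using G A12 spl(2,4) assoc_mult_mat[OF G A12 spl(2)] by simp
  ultimately have GX: "G * (- (A12 * Z2)) = 1\<^sub>m k" using G spl(2,4) by (intro eq_matI) auto
  show ?thesis using vec_space.rank_right_invertible[OF G _ GX] A12 spl(2) G by simp
qed

lemma pi_observer_imp_pbh_detectable:
  fixes A12 A22 L F G :: "real mat"
  assumes A12: "A12 \<in> carrier_mat p n" and A22: "A22 \<in> carrier_mat n n"
    and L: "L \<in> carrier_mat n p" and F: "F \<in> carrier_mat n k" and G: "G \<in> carrier_mat k p"
    and obs: "ro_pi_observer A12 A22 L F G"
  shows "pbh_detectable A22 A12"
proof (rule pbh_detectableI[OF A22 A12])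
  fix s z assume s: "0 \<le> Re s" and z: "z \<in> carrier_vec n" and ev: "cmat A22 *\<^sub>v z = s \<cdot>\<^sub>v z"
    and Cz: "cmat A12 *\<^sub>v z = 0\<^sub>v p"
  define X where "X = A22 - L * A12"
  define M where "M = four_block_mat X F (- (G * A12)) (0\<^sub>m k k)"
  have X: "X \<in> carrier_mat n n" and GA: "- (G * A12) \<in> carrier_mat k n" unfolding X_def using L G A12 by auto
  have M: "M \<in> carrier_mat (n + k) (n + k)" and h: "hurwitz M"
    using X obs G unfolding ro_pi_observer_def M_def X_def by auto
  have cA12: "cmat A12 \<in> carrier_mat p n" and cL: "cmat L \<in> carrier_mat n p" and cG: "cmat G \<in> carrier_mat k p"
    and cF: "cmat F \<in> carrier_mat n k"
    using A12 L G F by auto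
  have "cmat L *\<^sub>v 0\<^sub>v p = 0\<^sub>v n" "cmat G *\<^sub>v 0\<^sub>v p = 0\<^sub>v k" "cmat F *\<^sub>v 0\<^sub>v k = 0\<^sub>v n"
    using cL cG cF by auto
  hence e1: "cmat X *\<^sub>v z = s \<cdot>\<^sub>v z" and e2: "cmat (- (G * A12)) *\<^sub>v z = 0\<^sub>v k" and e3: "cmat F *\<^sub>v 0\<^sub>v k = 0\<^sub>v n"
    unfolding X_def cmat_minus[OF A22 mult_carrier_mat[OF L A12]] cmat_uminus cmat_mult[OF L A12] cmat_mult[OF G A12]
    using A22 cL cA12 cG z ev Cz by (simp_all add: minus_mult_distrib_mat_vec)
  have "0\<^sub>m k k *\<^sub>v 0\<^sub>v k = (0\<^sub>v k :: complex vec)" "s \<cdot>\<^sub>v 0\<^sub>v k = (0\<^sub>v k :: complex vec)" by auto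
  hence "cmat M *\<^sub>v (z @\<^sub>v 0\<^sub>v k) = s \<cdot>\<^sub>v (z @\<^sub>v 0\<^sub>v k)"
    unfolding M_def cmat_four_block_mat[OF X F GA zero_carrier_mat] smult_vec_append[OF z zero_carrier_vec]
    using X F GA z e1 e2 e3 by (subst four_block_mat_mult_vec[of _ n n _ k _ k]) auto
  hence "z @\<^sub>v 0\<^sub>v k = 0\<^sub>v (n + k)" using hurwitzD[OF h M] s z by force
  thus "z = 0\<^sub>v n" unfolding zero_vec_append using z by simp
qed

lemma pbh_detectable_imp_pi_observer:
  fixes A12 A22 :: "real mat"
  assumes A12: "A12 \<in> carrier_mat p n" and A22: "A22 \<in> carrier_mat n n" and P: "pbh_detectable A22 A12"
    and k: "k \<le> mrank A12"
  shows "\<exists>L F G. L \<in> carrier_mat n p \<and> F \<in> carrier_mat n k \<and> G \<in> carrier_mat k p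
    \<and> mrank G = k \<and> ro_pi_observer A12 A22 L F G"
proof -
  obtain L0 where L0: "L0 \<in> carrier_mat n p" and h0: "hurwitz (A22 - L0 * A12)"
    using exists_hurwitz_output_injection[OF A22 A12 P] by blast
  have "k \<le> vec_space.rank p A12" using k A12 by simp
  then obtain Y where Y: "Y \<in> carrier_mat n k"
    and inj: "\<And>w. w \<in> carrier_vec k \<Longrightarrow> (A12 * Y) *\<^sub>v w = 0\<^sub>v p \<Longrightarrow> w = 0\<^sub>v k"
    using vec_space.exists_injective_column_selection[OF A12] by blast
  define F where "F = (A22 - L0 * A12) * Y"
  have F: "F \<in> carrier_mat n k" unfolding F_def using L0 A12 Y by auto
  have "pbh_detectable (aug_state_mat A22 F) (aug_output_mat A12 k)"
    unfolding F_def by (rule pbh_detectable_aug[OF A12 A22 P L0 h0 Y inj])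
  moreover have "aug_state_mat A22 F \<in> carrier_mat (n + k) (n + k)" "aug_output_mat A12 k \<in> carrier_mat p (n + k)"
    unfolding aug_state_mat_def aug_output_mat_def using A22 F A12 by auto
  ultimately obtain Lb where "Lb \<in> carrier_mat (n + k) p" "hurwitz (aug_state_mat A22 F - Lb * aug_output_mat A12 k)"
    using exists_hurwitz_output_injection by blast
  then obtain L G where L: "L \<in> carrier_mat n p" and G: "G \<in> carrier_mat k p"
    and h: "hurwitz (four_block_mat (A22 - L * A12) F (- (G * A12)) (0\<^sub>m k k))"
    using aug_closed_loop_eq[OF A12 A22 F] by metis
  have "mrank G = k"
    by (rule rank_gain_if_hurwitz_pi_error[OF minus_carrier_mat[OF mult_carrier_mat[OF L A12]] F G A12 h])
  moreover have "ro_pi_observer A12 A22 L F G" unfolding ro_pi_observer_def using h G by simp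
  ultimately show ?thesis using L F G by blast
qed

theorem theorem2:
  fixes n m p k q :: nat
    and A B C T Tinv A11 A12 A21 A22 :: "real mat"
  assumes "A \<in> carrier_mat n n" and "B \<in> carrier_mat n m" and "C \<in> carrier_mat p n"
    and "mrank C = p"
    and "T \<in> carrier_mat n n" and "Tinv \<in> carrier_mat n n"
    and "T * Tinv = 1\<^sub>m n" and "Tinv * T = 1\<^sub>m n"
    and "C * T = mat p n (\<lambda>(i, j). if i = j then 1 else 0)"
    and "split_block (Tinv * A * T) p p = (A11, A12, A21, A22)"
    and "mrank A12 = q"
    and "q \<ge> k"
  shows "detectable A C \<longleftrightarrow>
    (\<exists>L F G. L \<in> carrier_mat (n - p) p \<and> F \<in> carrier_mat (n - p) k \<and> G \<in> carrier_mat k p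
       \<and> mrank G = k \<and> ro_pi_observer A12 A22 L F G)"
proof -
  note A = assms(1) and C = assms(3)
  have "p \<le> n" using vec_space.rank_le_nc[OF C] assms(4) C by simp
  note block = detectable_iff_pbh_detectable_block[OF A C this assms(5-10)]
  show ?thesis
  proof
    assume "detectable A C"
    thus "\<exists>L F G. L \<in> carrier_mat (n - p) p \<and> F \<in> carrier_mat (n - p) k \<and> G \<in> carrier_mat k p
       \<and> mrank G = k \<and> ro_pi_observer A12 A22 L F G"
      using pbh_detectable_imp_pi_observer[OF block(1,2)] block(3) assms(11,12) by simp
  next
    assume "\<exists>L F G. L \<in> carrier_mat (n - p) p \<and> F \<in> carrier_mat (n - p) k \<and> G \<in> carrier_mat k p
       \<and> mrank G = k \<and> ro_pi_observer A12 A22 L F G"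
    thus "detectable A C" using pi_observer_imp_pbh_detectable[OF block(1,2)] block(3) by blast
  qed
qed

end
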